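(* Let $n\ge 1$, $d\ge 2$, and let $P\in\mathbb{C}[x_0,\dots,x_n]$ be a nonzero homogeneous polynomial of degree $d$. Then $$\mathrm{r}(P)\le (\mathrm{Cr}(P)-1)d+2-\mathrm{Cr}(P).$$
   Context: The rank $\mathrm{r}(P)$ of a degree $d$ form $P$ is the minimum $r$ such that $P=L_1^d+\cdots+L_r^d$ for some linear forms $L_1,\dots,L_r\in\mathbb{C}[x_0,\dots,x_n]$. Let $N=\binom{n+d}{d}-1$ and let $\nu_d:\mathbb{P}^n\to\mathbb{P}^N$ be the degree $d$ Veronese embedding, with image $X_{n,d}$; $[P]\in\mathbb{P}^N$ denotes the projective class of $P$ (so $\mathrm{r}(P)$ is the minimal number of points of $X_{n,d}$ whose linear span contains $[P]$). A zero-dimensional scheme $Z\subset\mathbb{P}^N$ is curvilinear if the Zariski tangent space at each point of its support has dimension $\le 1$ (equivalently, each connected component is of the form $\mathcal{O}_{C,Q}/\mathfrak{m}_Q^{e}$ for a smooth point $Q$ of a reduced curve $C$). The curvilinear rank is $\mathrm{Cr}(P)=\min\{\deg(Z): Z\subset X_{n,d}$ a zero-dimensional curvilinear scheme with $[P]\in\langle Z\rangle\}$, where $\langle Z\rangle$ is the linear span of $Z$. *)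

theory Defs
  imports Complex_Main "HOL-Computational_Algebra.Polynomial"
begin

text \<open>Forms in C[x_0,...,x_n] are represented as polynomial functions on
  vectors x :: nat => complex depending only on x_0,...,x_n (over the infinite
  field C, polynomials and polynomial functions coincide).\<close>

definition lin_form :: "nat \<Rightarrow> (nat \<Rightarrow> complex) \<Rightarrow> (nat \<Rightarrow> complex) \<Rightarrow> complex" where
  "lin_form n a x = (\<Sum>j\<le>n. a j * x j)"

definition exps :: "nat \<Rightarrow> nat \<Rightarrow> (nat \<Rightarrow> nat) set" where
  "exps n d = {\<alpha>. (\<forall>j>n. \<alpha> j = 0) \<and> (\<Sum>j\<le>n. \<alpha> j) = d}"

definition is_form :: "nat \<Rightarrow> nat \<Rightarrow> ((nat \<Rightarrow> complex) \<Rightarrow> complex) \<Rightarrow> bool" where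
  "is_form n d P \<longleftrightarrow> (\<exists>c. P = (\<lambda>x. \<Sum>\<alpha>\<in>exps n d. c \<alpha> * (\<Prod>j\<le>n. x j ^ \<alpha> j)))"

definition waring_rank :: "nat \<Rightarrow> nat \<Rightarrow> ((nat \<Rightarrow> complex) \<Rightarrow> complex) \<Rightarrow> nat" where
  "waring_rank n d P =
     (LEAST r. \<exists>L :: nat \<Rightarrow> nat \<Rightarrow> complex. P = (\<lambda>x. \<Sum>i<r. lin_form n (L i) x ^ d))"

definition proportional :: "nat \<Rightarrow> (nat \<Rightarrow> complex) \<Rightarrow> (nat \<Rightarrow> complex) \<Rightarrow> bool" where
  "proportional n a b \<longleftrightarrow> (\<exists>c. \<forall>j\<le>n. b j = c * a j)"

text \<open>A curvilinear component of length e supported at [A 0] is the image of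
  Spec C[t]/(t^e) under the jet L(t) = A 0 + t A 1 + ... + t^(e-1) A (e-1)
  (a closed embedding: A 0 nonzero, and A 1 not proportional to A 0 if e >= 2).
  The linear span of its image under nu_d is spanned by the coefficients of
  t^k, k < e, in L(t)^d.\<close>
definition jet_power_coeff ::
  "nat \<Rightarrow> nat \<Rightarrow> (nat \<Rightarrow> nat \<Rightarrow> complex) \<Rightarrow> nat \<Rightarrow> nat \<Rightarrow> (nat \<Rightarrow> complex) \<Rightarrow> complex" where
  "jet_power_coeff n d A e k x = coeff ((\<Sum>m<e. monom (lin_form n (A m) x) m) ^ d) k"

definition curvilinear_data ::
  "nat \<Rightarrow> nat \<Rightarrow> (nat \<Rightarrow> nat) \<Rightarrow> (nat \<Rightarrow> nat \<Rightarrow> nat \<Rightarrow> complex) \<Rightarrow> bool" where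
  "curvilinear_data n s e A \<longleftrightarrow>
     (\<forall>i<s. 1 \<le> e i \<and> (\<exists>j\<le>n. A i 0 j \<noteq> 0) \<and>
            (2 \<le> e i \<longrightarrow> \<not> proportional n (A i 0) (A i 1))) \<and>
     (\<forall>i<s. \<forall>i'<s. i \<noteq> i' \<longrightarrow> \<not> proportional n (A i 0) (A i' 0))"

definition in_curvilinear_span ::
  "nat \<Rightarrow> nat \<Rightarrow> nat \<Rightarrow> (nat \<Rightarrow> nat) \<Rightarrow> (nat \<Rightarrow> nat \<Rightarrow> nat \<Rightarrow> complex)
     \<Rightarrow> ((nat \<Rightarrow> complex) \<Rightarrow> complex) \<Rightarrow> bool" where
  "in_curvilinear_span n d s e A P \<longleftrightarrow>
     (\<exists>c :: nat \<Rightarrow> nat \<Rightarrow> complex.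
        P = (\<lambda>x. \<Sum>i<s. \<Sum>k<e i. c i k * jet_power_coeff n d (A i) (e i) k x))"

definition curvilinear_rank :: "nat \<Rightarrow> nat \<Rightarrow> ((nat \<Rightarrow> complex) \<Rightarrow> complex) \<Rightarrow> nat" where
  "curvilinear_rank n d P =
     (LEAST r. \<exists>s e A. curvilinear_data n s e A \<and> (\<Sum>i<s. e i) = r \<and>
                        in_curvilinear_span n d s e A P)"

end

theory Submission
  imports Defs "HOL-Computational_Algebra.Fundamental_Theorem_Algebra"
    "HOL-Computational_Algebra.Polynomial_FPS"
begin

text \<open>A curvilinear component of length \<open>e\<close> is the jet \<open>L(t) = A_0 + t A_1 + \<dots> + t^(e-1) A_(e-1)\<close>,
  and its span is spanned by the first \<open>e\<close> coefficients of \<open>L(t)^d\<close>, a polynomial of degree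
  \<open>\<le> d (e - 1)\<close> in \<open>t\<close>. On polynomials of that degree, every combination of the first \<open>e\<close>
  coefficients equals a combination of evaluations at the \<open>(e - 1)(d - 1) + 1\<close> simple roots of a
  suitable polynomial \<open>h\<close>, namely one whose multiples it annihilates. Hence each component
  contributes \<open>(e - 1)(d - 1) + 1\<close> powers \<open>L(z)^d\<close>, and summing over the components (using
  \<open>d \<ge> 2\<close>) gives at most \<open>(Cr - 1)(d - 1) + 1\<close> powers. That the curvilinear rank is attained
  at all follows from polarization: every form is a sum of \<open>d\<close>-th powers.\<close>

definition lagrange_basis :: "'a::field set \<Rightarrow> 'a \<Rightarrow> 'a poly" where
  "lagrange_basis S z = smult (inverse (\<Prod>w\<in>S-{z}. z - w)) (\<Prod>w\<in>S-{z}. [:-w, 1:])"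

lemma degree_lagrange_basis:
  assumes "finite S" "z \<in> S"
  shows "degree (lagrange_basis S z) \<le> card S - 1"
proof -
  have "degree (lagrange_basis S z) \<le> degree (\<Prod>w\<in>S-{z}. [:-w, 1:])"
    unfolding lagrange_basis_def by (rule degree_smult_le)
  also have "\<dots> \<le> (\<Sum>w\<in>S-{z}. degree [:-w, 1:])"
    using degree_prod_sum_le[of "S-{z}" "\<lambda>w. [:-w, 1:]"] assms by (simp add: o_def)
  also have "\<dots> = card S - 1" using assms by simp
  finally show ?thesis .
qed

lemma poly_lagrange_basis:
  assumes "finite S" "z \<in> S" "w \<in> S"
  shows "poly (lagrange_basis S z) w = (if w = z then 1 else 0)"
proof (cases "w = z")
  case True
  have "(\<Prod>u\<in>S-{z}. z - u) \<noteq> 0" using assms by simp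
  then show ?thesis using True by (simp add: lagrange_basis_def poly_prod)
next
  case False
  then have "(\<Prod>u\<in>S-{z}. poly [:-u, 1:] w) = 0"
    using assms by (subst prod_zero_iff) auto
  then show ?thesis using False by (simp add: lagrange_basis_def poly_prod)
qed

lemma degree_lagrange_interpolant:
  assumes "finite S"
  shows "degree (\<Sum>z\<in>S. smult (f z) (lagrange_basis S z)) \<le> card S - 1"
proof (rule degree_sum_le[OF assms])
  fix z assume "z \<in> S"
  have "degree (smult (f z) (lagrange_basis S z)) \<le> degree (lagrange_basis S z)"
    by (rule degree_smult_le)
  also have "\<dots> \<le> card S - 1" using assms \<open>z \<in> S\<close> by (rule degree_lagrange_basis)
  finally show "degree (smult (f z) (lagrange_basis S z)) \<le> card S - 1" .
qed

lemma poly_lagrange_interpolant: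
  assumes "finite S" "w \<in> S"
  shows "poly (\<Sum>z\<in>S. smult (f z) (lagrange_basis S z)) w = f w"
  using assms by (simp add: poly_sum poly_lagrange_basis if_distrib cong: if_cong)

lemma poly_eq_0_if_many_roots:
  fixes p :: "'a::idom poly"
  assumes "finite S" "degree p < card S" "\<And>z. z \<in> S \<Longrightarrow> poly p z = 0"
  shows "p = 0"
proof (rule ccontr)
  assume "p \<noteq> 0"
  then have "card S \<le> card {x. poly p x = 0}"
    using assms(3) by (intro card_mono[OF poly_roots_finite]) auto
  also have "\<dots> \<le> degree p" using \<open>p \<noteq> 0\<close> by (rule card_poly_roots_bound)
  finally show False using assms(2) by simp
qed

lemma lagrange_interpolation:
  fixes p :: "'a::field poly"
  assumes "finite S" "degree p < card S"
  shows "p = (\<Sum>z\<in>S. smult (poly p z) (lagrange_basis S z))"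
proof -
  let ?q = "p - (\<Sum>z\<in>S. smult (poly p z) (lagrange_basis S z))"
  have "degree ?q \<le> card S - 1"
    using assms degree_lagrange_interpolant[OF assms(1)] by (intro degree_diff_le) auto
  then have "degree ?q < card S" using assms(2) by linarith
  moreover have "poly ?q z = 0" if "z \<in> S" for z
    using assms(1) that by (simp only: poly_diff poly_lagrange_interpolant diff_self)
  ultimately have "?q = 0" by (rule poly_eq_0_if_many_roots[OF assms(1)])
  then show ?thesis by (rule right_minus_eq[THEN iffD1])
qed

lemma coeff_eq_sum_lagrange:
  fixes p :: "'a::field poly"
  assumes "finite S" "degree p < card S"
  shows "coeff p k = (\<Sum>z\<in>S. poly p z * coeff (lagrange_basis S z) k)"
proof -
  have "coeff p k = coeff (\<Sum>z\<in>S. smult (poly p z) (lagrange_basis S z)) k"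
    using lagrange_interpolation[OF assms] by (rule arg_cong)
  also have "\<dots> = (\<Sum>z\<in>S. poly p z * coeff (lagrange_basis S z) k)"
    by (simp only: coeff_sum coeff_smult)
  finally show ?thesis .
qed

lemma card_roots_rsquarefree:
  fixes p :: "complex poly"
  assumes "rsquarefree p"
  shows "card {z. poly p z = 0} = degree p"
proof -
  have "p \<noteq> 0" using assms by (simp add: rsquarefree_def)
  have "degree p = degree (smult (lead_coeff p) (\<Prod>z | poly p z = 0. [:-z, 1:]))"
    using complex_poly_decompose_rsquarefree[OF assms] by simp
  also have "\<dots> = degree (\<Prod>z | poly p z = 0. [:-z, 1:])" using \<open>p \<noteq> 0\<close> by simp
  also have "\<dots> = (\<Sum>z | poly p z = 0. degree [:-z, 1:])"
    by (rule degree_prod_eq_sum_degree) auto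
  finally show ?thesis by simp
qed

lemma rsquarefree_dvdI:
  fixes h g :: "complex poly"
  assumes "rsquarefree h" "\<And>z. poly h z = 0 \<Longrightarrow> poly g z = 0"
  shows "h dvd g"
proof -
  have "h \<noteq> 0" using assms(1) by (simp add: rsquarefree_def)
  have "g mod h = 0"
  proof (rule ccontr)
    assume "g mod h \<noteq> 0"
    have "degree (g mod h) < card {z. poly h z = 0}"
      using degree_mod_less'[OF \<open>h \<noteq> 0\<close> \<open>g mod h \<noteq> 0\<close>] card_roots_rsquarefree[OF assms(1)]
      by simp
    moreover have "poly (g mod h) z = 0" if "poly h z = 0" for z
    proof -
      have "g mod h = g - g div h * h" by (simp add: minus_div_mult_eq_mod)
      then show ?thesis using assms(2) that by simp
    qed
    ultimately have "g mod h = 0"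
      using poly_roots_finite[OF \<open>h \<noteq> 0\<close>] by (intro poly_eq_0_if_many_roots) auto
    with \<open>g mod h \<noteq> 0\<close> show False ..
  qed
  then show ?thesis by (simp add: mod_eq_0_iff_dvd)
qed

lemma truncated_inverse_exists:
  fixes C :: "'a::field poly"
  assumes "coeff C 0 \<noteq> 0" "0 < e"
  obtains b where "degree b < e" "\<And>k. k < e \<Longrightarrow> coeff (C * b) k = (if k = 0 then 1 else 0)"
proof
  define I where "I = inverse (fps_of_poly C)"
  show "degree (truncate_fps e I) < e" using assms(2) by (rule degree_truncate_fps)
  fix k assume "k < e"
  have "coeff (C * truncate_fps e I) k = (\<Sum>i=0..k. fps_nth (fps_of_poly C) i * fps_nth I (k - i))"
    using \<open>k < e\<close> by (auto simp: coeff_mult coeff_truncate_fps atLeast0AtMost intro!: sum.cong)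
  also have "\<dots> = fps_nth (fps_of_poly C * I) k" by (simp add: fps_mult_nth)
  also have "fps_of_poly C * I = 1"
    unfolding I_def using assms(1) by (intro inverse_mult_eq_1') simp
  finally show "coeff (C * truncate_fps e I) k = (if k = 0 then 1 else 0)" by simp
qed

text \<open>A double root \<open>z\<close> of \<open>b + \<mu> t^N\<close> is a nonzero root of the fixed polynomial
  \<open>t b' - N b\<close> and determines \<open>\<mu> = -b(z)/z^N\<close>, so only finitely many \<open>\<mu>\<close> are bad.\<close>
lemma rsquarefree_add_monom_exists:
  fixes b :: "complex poly"
  assumes b0: "coeff b 0 \<noteq> 0" and deg: "degree b < N"
  obtains \<mu> where "\<mu> \<noteq> 0" "rsquarefree (b + monom \<mu> N)"
proof -
  define w where "w = [:0, 1:] * pderiv b - smult (of_nat N) b"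
  have "coeff w 0 \<noteq> 0" using b0 deg by (simp add: w_def)
  then have "w \<noteq> 0" by auto
  define Bad where "Bad = insert 0 ((\<lambda>z. - poly b z / z ^ N) ` {z. poly w z = 0})"
  have "finite Bad" unfolding Bad_def using poly_roots_finite[OF \<open>w \<noteq> 0\<close>] by simp
  then obtain \<mu> :: complex where \<mu>: "\<mu> \<notin> Bad"
    using ex_new_if_finite[OF infinite_UNIV_char_0] by blast
  have "rsquarefree (b + monom \<mu> N)"
    unfolding rsquarefree_roots
  proof (intro allI notI)
    fix z assume "poly (b + monom \<mu> N) z = 0 \<and> poly (pderiv (b + monom \<mu> N)) z = 0"
    then have hz: "poly b z = - (\<mu> * z ^ N)"
      and hz': "poly (pderiv b) z = - (of_nat N * \<mu> * z ^ (N - 1))"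
      by (auto simp: pderiv_add pderiv_monom poly_monom eq_neg_iff_add_eq_0)
    have "z \<noteq> 0"
      using hz b0 deg by (auto simp: poly_0_coeff_0 power_0_left)
    have "z * z ^ (N - 1) = z ^ N" using deg by (simp flip: power_Suc)
    then have "poly w z = 0" by (simp add: w_def hz hz' algebra_simps)
    moreover have "\<mu> = - poly b z / z ^ N" using hz \<open>z \<noteq> 0\<close> by simp
    ultimately show False using \<mu> by (auto simp: Bad_def)
  qed
  moreover have "\<mu> \<noteq> 0" using \<mu> by (auto simp: Bad_def)
  ultimately show ?thesis using that by blast
qed

lemma coeff_mult_eq_sum_evaluations:
  fixes C h F :: "complex poly"
  assumes h: "rsquarefree h" "degree h \<le> D + 1"
    and annihilates: "\<And>q. degree (h * q) \<le> D \<Longrightarrow> coeff (C * (h * q)) m = 0"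
    and F: "degree F \<le> D"
  defines "S \<equiv> {z. poly h z = 0}"
  shows "coeff (C * F) m = (\<Sum>z\<in>S. coeff (C * lagrange_basis S z) m * poly F z)"
proof -
  have "finite S" unfolding S_def using h(1) by (intro poly_roots_finite) (simp add: rsquarefree_def)
  define I where "I = (\<Sum>z\<in>S. smult (poly F z) (lagrange_basis S z))"
  have "degree I \<le> card S - 1"
    unfolding I_def by (rule degree_lagrange_interpolant[OF \<open>finite S\<close>])
  then have "degree I \<le> D"
    using card_roots_rsquarefree[OF h(1)] h(2) unfolding S_def by linarith
  have "h dvd F - I"
    using \<open>finite S\<close> by (intro rsquarefree_dvdI h(1)) (simp add: I_def S_def poly_lagrange_interpolant)
  then obtain q where q: "F - I = h * q" by (elim dvdE)
  have "degree (h * q) \<le> D" unfolding q[symmetric] using F \<open>degree I \<le> D\<close> by (rule degree_diff_le)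
  then have "coeff (C * (F - I)) m = 0" unfolding q by (rule annihilates)
  then have "coeff (C * F) m = coeff (C * I) m" by (simp add: right_diff_distrib)
  also have "\<dots> = (\<Sum>z\<in>S. coeff (C * lagrange_basis S z) m * poly F z)"
    unfolding I_def sum_distrib_left coeff_sum mult_smult_right coeff_smult by (simp add: mult.commute)
  finally show ?thesis .
qed

lemma coeff_reversed_mult:
  "coeff ((\<Sum>k<e. monom (c k) (e - 1 - k)) * F) (e - 1) = (\<Sum>k<e. c k * coeff F k)"
  by (auto simp: sum_distrib_right coeff_sum coeff_monom_mult intro!: sum.cong)

lemma coeff_reversed_0:
  assumes "0 < e"
  shows "coeff (\<Sum>k<e. monom (c k) (e - 1 - k)) 0 = c (e - 1)"
proof -
  have "coeff (\<Sum>k<e. monom (c k) (e - 1 - k)) 0 = (\<Sum>k<e. if k = e - 1 then c k else 0)"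
    unfolding coeff_sum by (intro sum.cong) auto
  also have "\<dots> = c (e - 1)" using assms by simp
  finally show ?thesis .
qed

lemma coeff_mult_truncated_inverse_vanishes:
  fixes C b q :: "'a::idom poly"
  assumes Cb: "\<And>k. k < e \<Longrightarrow> coeff (C * b) k = (if k = 0 then 1 else 0)"
    and e: "0 < e" "e \<le> N" and deg_h: "degree (b + monom \<mu> N) = N"
    and deg_hq: "degree ((b + monom \<mu> N) * q) < N + (e - 1)"
  shows "coeff (C * ((b + monom \<mu> N) * q)) (e - 1) = 0"
proof -
  have "coeff q (e - 1) = 0"
  proof (cases "q = 0")
    case False
    have "b + monom \<mu> N \<noteq> 0" using deg_h e by auto
    with False have "degree ((b + monom \<mu> N) * q) = N + degree q"
      using deg_h by (simp add: degree_mult_eq)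
    then show ?thesis using deg_hq by (simp add: coeff_eq_0)
  qed simp
  have "C * ((b + monom \<mu> N) * q) = (C * b) * q + monom \<mu> N * (C * q)"
    by (simp add: algebra_simps)
  then have "coeff (C * ((b + monom \<mu> N) * q)) (e - 1) = coeff ((C * b) * q) (e - 1)"
    using e by (simp add: coeff_monom_mult)
  also have "\<dots> = (\<Sum>i\<le>e - 1. coeff (C * b) i * coeff q (e - 1 - i))"
    by (rule coeff_mult)
  also have "\<dots> = (\<Sum>i\<le>e - 1. if i = 0 then coeff q (e - 1) else 0)"
    using e by (intro sum.cong) (auto simp: Cb)
  finally show ?thesis using \<open>coeff q (e - 1) = 0\<close> by simp
qed

text \<open>Writing the functional as \<open>F \<mapsto> coeff (C F) (e - 1)\<close> with \<open>C(0) = c (e - 1) \<noteq> 0\<close>,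
  it vanishes on all multiples of degree \<open>\<le> d (e - 1)\<close> of \<open>h = b + \<mu> t^N\<close>, where \<open>b\<close> is the
  inverse of \<open>C\<close> modulo \<open>t^e\<close>; for generic \<open>\<mu>\<close> the polynomial \<open>h\<close> has \<open>N\<close> simple roots.\<close>
lemma coeff_functional_eq_point_evaluations:
  fixes c :: "nat \<Rightarrow> complex"
  assumes d: "2 \<le> d" and e: "0 < e" and c: "c (e - 1) \<noteq> 0"
  obtains S :: "complex set" and a where "finite S" "card S = (e - 1) * (d - 1) + 1"
    "\<And>F. degree F \<le> d * (e - 1) \<Longrightarrow> (\<Sum>k<e. c k * coeff F k) = (\<Sum>z\<in>S. a z * poly F z)"
proof -
  define N where "N = (e - 1) * (d - 1) + 1"
  define C where "C = (\<Sum>k<e. monom (c k) (e - 1 - k))"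
  have "coeff C 0 = c (e - 1)" unfolding C_def by (rule coeff_reversed_0[OF e])
  with c have "coeff C 0 \<noteq> 0" by simp
  then obtain b where b: "degree b < e"
    and Cb: "\<And>k. k < e \<Longrightarrow> coeff (C * b) k = (if k = 0 then 1 else 0)"
    using truncated_inverse_exists e by blast
  have "coeff b 0 \<noteq> 0"
    using Cb[of 0] e by (auto simp: coeff_mult)
  have DN: "d * (e - 1) + 1 = N + (e - 1)"
    using d e unfolding N_def by (cases d; cases e) (simp_all add: algebra_simps)
  have "e \<le> N"
    using d e unfolding N_def by (cases d; cases e) (simp_all add: algebra_simps)
  with b have "degree b < N" by simp
  obtain \<mu> where "\<mu> \<noteq> 0" and rsf: "rsquarefree (b + monom \<mu> N)"
    by (rule rsquarefree_add_monom_exists[OF \<open>coeff b 0 \<noteq> 0\<close> \<open>degree b < N\<close>])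
  define h where "h = b + monom \<mu> N"
  have "degree (monom \<mu> N) = N" using \<open>\<mu> \<noteq> 0\<close> by (rule degree_monom_eq)
  then have deg_h: "degree h = N"
    using \<open>degree b < N\<close> by (simp add: h_def degree_add_eq_right)
  have annihilates: "coeff (C * (h * q)) (e - 1) = 0" if "degree (h * q) \<le> d * (e - 1)" for q
    using coeff_mult_truncated_inverse_vanishes[OF Cb e \<open>e \<le> N\<close>] deg_h that DN
    unfolding h_def by simp
  have "rsquarefree h" "degree h \<le> d * (e - 1) + 1" using rsf deg_h DN by (simp_all add: h_def)
  note evaluations = coeff_mult_eq_sum_evaluations[where D = "d * (e - 1)", OF this]
  show ?thesis
  proof (rule that)
    show "finite {z. poly h z = 0}"
      using \<open>rsquarefree h\<close> by (intro poly_roots_finite) (simp add: rsquarefree_def)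
    show "card {z. poly h z = 0} = (e - 1) * (d - 1) + 1"
      using card_roots_rsquarefree[OF \<open>rsquarefree h\<close>] deg_h by (simp add: N_def)
    show "(\<Sum>k<e. c k * coeff F k) =
        (\<Sum>z | poly h z = 0. coeff (C * lagrange_basis {z. poly h z = 0} z) (e - 1) * poly F z)"
      if "degree F \<le> d * (e - 1)" for F
      unfolding coeff_reversed_mult[where c = c and e = e and F = F, symmetric] C_def[symmetric]
      by (rule evaluations[OF annihilates that])
  qed
qed

definition sum_of_powers :: "nat \<Rightarrow> nat \<Rightarrow> nat \<Rightarrow> ((nat \<Rightarrow> complex) \<Rightarrow> complex) \<Rightarrow> bool" where
  "sum_of_powers n d r P \<longleftrightarrow> (\<exists>L. P = (\<lambda>x. \<Sum>i<r. lin_form n (L i) x ^ d))"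

lemma waring_rank_le: "sum_of_powers n d r P \<Longrightarrow> waring_rank n d P \<le> r"
  unfolding waring_rank_def sum_of_powers_def by (rule Least_le)

lemma lin_form_scale: "lin_form n (\<lambda>j. b * a j) x = b * lin_form n a x"
  by (simp add: lin_form_def sum_distrib_left mult.assoc)

lemma lin_form_add_scale: "lin_form n (\<lambda>j. a j + t * b j) x = lin_form n a x + t * lin_form n b x"
  by (simp add: lin_form_def sum.distrib sum_distrib_left algebra_simps)

lemma sum_of_powers_zero: "sum_of_powers n d 0 (\<lambda>x. 0)"
  by (simp add: sum_of_powers_def)

lemma sum_of_powers_power: "sum_of_powers n d 1 (\<lambda>x. lin_form n v x ^ d)"
  unfolding sum_of_powers_def by (intro exI[of _ "\<lambda>i. v"]) simp

lemma sum_of_powers_add: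
  assumes "sum_of_powers n d r P" "sum_of_powers n d r' Q"
  shows "sum_of_powers n d (r + r') (\<lambda>x. P x + Q x)"
proof -
  obtain L L' where "P = (\<lambda>x. \<Sum>i<r. lin_form n (L i) x ^ d)" "Q = (\<lambda>x. \<Sum>i<r'. lin_form n (L' i) x ^ d)"
    using assms by (auto simp: sum_of_powers_def)
  moreover have "(\<Sum>i<r + k. g i) = (\<Sum>i<r. g i) + (\<Sum>i<k. g (r + i))" for k and g :: "nat \<Rightarrow> complex"
    by (induction k) (simp_all add: add.assoc)
  ultimately have "(\<lambda>x. P x + Q x) =
      (\<lambda>x. \<Sum>i<r + r'. lin_form n (if i < r then L i else L' (i - r)) x ^ d)"
    by simp
  then show ?thesis unfolding sum_of_powers_def by (intro exI[of _ "\<lambda>i. if i < r then L i else L' (i - r)"])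
qed

lemma sum_of_powers_sum:
  assumes "\<And>z. z \<in> S \<Longrightarrow> sum_of_powers n d (R z) (f z)"
  shows "sum_of_powers n d (\<Sum>z\<in>S. R z) (\<lambda>x. \<Sum>z\<in>S. f z x)"
proof (cases "finite S")
  case True
  then show ?thesis using assms
  proof (induction S rule: finite_induct)
    case (insert z S)
    then show ?case using sum_of_powers_add[of n d "R z" "f z"] by simp
  qed (simp add: sum_of_powers_zero)
qed (simp add: sum_of_powers_zero)

lemma sum_of_powers_mono:
  assumes "0 < d" "r \<le> r'" "sum_of_powers n d r P"
  shows "sum_of_powers n d r' P"
proof -
  have "sum_of_powers n d (r' - r) (\<lambda>x. 0)"
    unfolding sum_of_powers_def using assms(1)
    by (intro exI[of _ "\<lambda>i j. 0"]) (simp add: lin_form_def zero_power)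
  from sum_of_powers_add[OF assms(3) this] show ?thesis using assms(2) by simp
qed

lemma complex_root_exists:
  assumes "0 < d"
  obtains \<beta> :: complex where "\<beta> ^ d = a"
proof
  have "rcis (root d (cmod a)) (Arg a / real d) ^ d = rcis (root d (cmod a) ^ d) (real d * (Arg a / real d))"
    by (rule DeMoivre2)
  also have "\<dots> = a" using assms by (simp add: rcis_cmod_Arg)
  finally show "rcis (root d (cmod a)) (Arg a / real d) ^ d = a" .
qed

lemma sum_of_powers_scale:
  assumes "0 < d" "sum_of_powers n d r P"
  shows "sum_of_powers n d r (\<lambda>x. a * P x)"
proof -
  obtain L where L: "P = (\<lambda>x. \<Sum>i<r. lin_form n (L i) x ^ d)"
    using assms(2) by (auto simp: sum_of_powers_def)
  obtain \<beta> where \<beta>: "\<beta> ^ d = a" using complex_root_exists[OF assms(1)] .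
  have "(\<lambda>x. a * P x) = (\<lambda>x. \<Sum>i<r. lin_form n (\<lambda>j. \<beta> * L i j) x ^ d)"
    by (simp add: L lin_form_scale sum_distrib_left power_mult_distrib \<beta>)
  then show ?thesis unfolding sum_of_powers_def by (intro exI[of _ "\<lambda>i j. \<beta> * L i j"])
qed

definition jet :: "nat \<Rightarrow> (nat \<Rightarrow> nat \<Rightarrow> complex) \<Rightarrow> nat \<Rightarrow> (nat \<Rightarrow> complex) \<Rightarrow> complex poly" where
  "jet n A e x = (\<Sum>m<e. monom (lin_form n (A m) x) m)"

lemma jet_power_coeff_eq: "jet_power_coeff n d A e k x = coeff (jet n A e x ^ d) k"
  by (simp add: jet_power_coeff_def jet_def)

lemma degree_jet_power: "degree (jet n A e x ^ d) \<le> d * (e - 1)"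
proof -
  have "degree (jet n A e x) \<le> e - 1"
    unfolding jet_def by (rule degree_le) (auto simp: coeff_sum)
  then show ?thesis
    using degree_power_le[of "jet n A e x" d] by (metis le_trans mult.commute mult_le_mono1)
qed

lemma poly_jet: "poly (jet n A e x) z = lin_form n (\<lambda>j. \<Sum>m<e. z ^ m * A m j) x"
proof -
  have "poly (jet n A e x) z = (\<Sum>m<e. \<Sum>j\<le>n. z ^ m * A m j * x j)"
    unfolding jet_def lin_form_def
    by (simp add: poly_sum poly_monom sum_distrib_left sum_distrib_right ac_simps)
  also have "\<dots> = lin_form n (\<lambda>j. \<Sum>m<e. z ^ m * A m j) x"
    unfolding lin_form_def by (subst sum.swap) (simp add: sum_distrib_right)
  finally show ?thesis .
qed

lemma coeff_power_add_monom_low: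
  fixes p :: "'a::comm_ring_1 poly"
  assumes "k < m"
  shows "coeff ((p + monom a m) ^ d) k = coeff (p ^ d) k"
  using assms
proof (induction d arbitrary: k)
  case (Suc d)
  have "coeff ((p + monom a m) ^ Suc d) k
      = coeff (p * (p + monom a m) ^ d) k + coeff (monom a m * (p + monom a m) ^ d) k"
    by (simp add: algebra_simps)
  also have "coeff (monom a m * (p + monom a m) ^ d) k = 0"
    using Suc.prems by (simp add: coeff_monom_mult)
  also have "coeff (p * (p + monom a m) ^ d) k = coeff (p ^ Suc d) k"
    using Suc by (simp add: coeff_mult)
  finally show ?case by simp
qed simp

lemma jet_power_coeff_Suc:
  "k < e \<Longrightarrow> jet_power_coeff n d A (Suc e) k x = jet_power_coeff n d A e k x"
  by (simp add: jet_power_coeff_eq jet_def coeff_power_add_monom_low)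

lemma jet_combination_sum_of_powers:
  fixes c :: "nat \<Rightarrow> complex"
  assumes d: "2 \<le> d"
  shows "sum_of_powers n d ((e - 1) * (d - 1) + 1) (\<lambda>x. \<Sum>k<e. c k * jet_power_coeff n d A e k x)"
proof (induction e)
  case 0
  have "sum_of_powers n d 1 (\<lambda>x. 0)"
    using sum_of_powers_mono[OF _ _ sum_of_powers_zero, of d 1] d by simp
  then show ?case by simp
next
  case (Suc e)
  show ?case
  proof (cases "c e = 0")
    case True
    then have "(\<lambda>x. \<Sum>k<Suc e. c k * jet_power_coeff n d A (Suc e) k x)
             = (\<lambda>x. \<Sum>k<e. c k * jet_power_coeff n d A e k x)"
      by (simp add: jet_power_coeff_Suc)
    moreover have "(e - 1) * (d - 1) + 1 \<le> (Suc e - 1) * (d - 1) + 1" by simp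
    ultimately show ?thesis
      using sum_of_powers_mono[OF _ _ Suc.IH] d by simp
  next
    case False
    then have "c (Suc e - 1) \<noteq> 0" by simp
    then obtain S a where S: "finite S" "card S = (Suc e - 1) * (d - 1) + 1"
      and eval: "\<And>F. degree F \<le> d * (Suc e - 1) \<Longrightarrow>
                   (\<Sum>k<Suc e. c k * coeff F k) = (\<Sum>z\<in>S. a z * poly F z)"
      using coeff_functional_eq_point_evaluations[OF d zero_less_Suc] by blast
    define Q where "Q z x = lin_form n (\<lambda>j. \<Sum>m<Suc e. z ^ m * A m j) x ^ d" for z x
    have "(\<Sum>k<Suc e. c k * jet_power_coeff n d A (Suc e) k x) = (\<Sum>z\<in>S. a z * Q z x)" for x
    proof -
      have "(\<Sum>k<Suc e. c k * jet_power_coeff n d A (Suc e) k x)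
          = (\<Sum>k<Suc e. c k * coeff (jet n A (Suc e) x ^ d) k)"
        by (simp only: jet_power_coeff_eq)
      also have "\<dots> = (\<Sum>z\<in>S. a z * poly (jet n A (Suc e) x ^ d) z)"
        by (rule eval[OF degree_jet_power])
      also have "\<dots> = (\<Sum>z\<in>S. a z * Q z x)"
        by (simp only: poly_power poly_jet Q_def)
      finally show ?thesis .
    qed
    moreover have "sum_of_powers n d (\<Sum>z\<in>S. 1) (\<lambda>x. \<Sum>z\<in>S. a z * Q z x)"
      using d unfolding Q_def
      by (intro sum_of_powers_sum sum_of_powers_scale sum_of_powers_power) simp
    ultimately show ?thesis using S by simp
  qed
qed

lemma coeff_linear_power_1:
  fixes a b :: "'a::comm_semiring_1"
  shows "coeff ([:a, b:] ^ p) 1 = of_nat p * a ^ (p - 1) * b"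
proof (induction p)
  case (Suc p)
  have "coeff ([:a, b:] ^ Suc p) 1 = a * coeff ([:a, b:] ^ p) 1 + b * a ^ p"
    by (simp add: coeff_pCons coeff_0_power split: nat.split)
  also have "\<dots> = of_nat (Suc p) * a ^ p * b"
    using Suc by (cases p) (simp_all add: algebra_simps)
  finally show ?case by simp
qed simp

text \<open>Polarization: \<open>p a^(p-1) b\<close> is the coefficient of \<open>t\<close> in \<open>(a + t b)^p\<close>, which is read off by
  Lagrange interpolation from the values at more than \<open>p\<close> points.\<close>
lemma power_pred_mult_eq_sum_powers:
  fixes a b :: "'a::field_char_0"
  assumes "finite S" "p < card S" "0 < p"
  shows "a ^ (p - 1) * b = (\<Sum>z\<in>S. coeff (lagrange_basis S z) 1 / of_nat p * (a + z * b) ^ p)"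
proof -
  have "degree [:a, b:] \<le> 1" by simp
  then have "degree ([:a, b:] ^ p) \<le> p"
    using degree_power_le[of "[:a, b:]" p] by (metis mult_le_mono1 mult_1 order_trans)
  then have deg: "degree ([:a, b:] ^ p) < card S" using assms(2) by linarith
  have "a ^ (p - 1) * b = coeff ([:a, b:] ^ p) 1 / of_nat p"
    unfolding coeff_linear_power_1 using assms(3) by simp
  also have "\<dots> = (\<Sum>z\<in>S. poly ([:a, b:] ^ p) z * coeff (lagrange_basis S z) 1) / of_nat p"
    by (simp only: coeff_eq_sum_lagrange[OF assms(1) deg])
  also have "\<dots> = (\<Sum>z\<in>S. coeff (lagrange_basis S z) 1 / of_nat p * (a + z * b) ^ p)"
    by (simp add: sum_divide_distrib mult.commute)
  finally show ?thesis .
qed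

lemma power_mult_prod_list_sum_of_powers:
  assumes "0 < d" "length ms \<le> d"
  shows "\<exists>r. sum_of_powers n d r
           (\<lambda>x. lin_form n l x ^ (d - length ms) * (\<Prod>m\<leftarrow>ms. lin_form n m x))"
  using assms(2)
proof (induction ms arbitrary: l)
  case Nil
  then show ?case using sum_of_powers_power by auto
next
  case (Cons m ms)
  define p where "p = d - length ms"
  have p: "0 < p" "p < card (of_nat ` {..d} :: complex set)"
    using Cons.prems by (auto simp: p_def card_image inj_on_def)
  define S :: "complex set" where "S = of_nat ` {..d}"
  define R where "R x = (\<Prod>m\<leftarrow>ms. lin_form n m x)" for x
  define Q where "Q z x = lin_form n (\<lambda>j. l j + z * m j) x ^ (d - length ms) * R x" for z x
  have "(\<lambda>x. lin_form n l x ^ (d - length (m # ms)) * (\<Prod>m\<leftarrow>m # ms. lin_form n m x))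
      = (\<lambda>x. \<Sum>z\<in>S. (coeff (lagrange_basis S z) 1 / of_nat p) * Q z x)"
  proof (rule ext)
    fix x
    have "d - length (m # ms) = p - 1" by (simp add: p_def)
    then have "lin_form n l x ^ (d - length (m # ms)) * (\<Prod>m\<leftarrow>m # ms. lin_form n m x)
        = lin_form n l x ^ (p - 1) * lin_form n m x * R x"
      by (simp add: R_def)
    also have "\<dots> = (\<Sum>z\<in>S. coeff (lagrange_basis S z) 1 / of_nat p *
                       (lin_form n l x + z * lin_form n m x) ^ p) * R x"
      using p unfolding S_def by (subst power_pred_mult_eq_sum_powers) auto
    also have "\<dots> = (\<Sum>z\<in>S. (coeff (lagrange_basis S z) 1 / of_nat p) * Q z x)"
      by (simp add: Q_def p_def[symmetric] lin_form_add_scale sum_distrib_right mult.assoc)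
    finally show "lin_form n l x ^ (d - length (m # ms)) * (\<Prod>m\<leftarrow>m # ms. lin_form n m x)
        = (\<Sum>z\<in>S. (coeff (lagrange_basis S z) 1 / of_nat p) * Q z x)" .
  qed
  moreover have "\<exists>r. sum_of_powers n d r (\<lambda>x. \<Sum>z\<in>S. (coeff (lagrange_basis S z) 1 / of_nat p) * Q z x)"
  proof -
    have "\<forall>z. \<exists>r. sum_of_powers n d r (Q z)"
      using Cons unfolding Q_def[abs_def] R_def by simp
    then obtain r where "\<forall>z. sum_of_powers n d (r z) (Q z)" by metis
    then have "sum_of_powers n d (\<Sum>z\<in>S. r z)
        (\<lambda>x. \<Sum>z\<in>S. (coeff (lagrange_basis S z) 1 / of_nat p) * Q z x)"
      using assms(1) by (intro sum_of_powers_sum sum_of_powers_scale) auto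
    then show ?thesis ..
  qed
  ultimately show ?case by (simp only:)
qed

definition unit_vector :: "nat \<Rightarrow> nat \<Rightarrow> complex" where
  "unit_vector j = (\<lambda>i. if i = j then 1 else 0)"

lemma lin_form_unit_vector:
  assumes "j \<le> n"
  shows "lin_form n (unit_vector j) x = x j"
proof -
  have "lin_form n (unit_vector j) x = (\<Sum>i\<le>n. if i = j then x i else 0)"
    unfolding lin_form_def by (intro sum.cong) (simp_all add: unit_vector_def)
  also have "\<dots> = x j" using assms by simp
  finally show ?thesis .
qed

lemma monomial_sum_of_powers:
  assumes "0 < d" "(\<Sum>j\<le>n. \<alpha> j) = d"
  shows "\<exists>r. sum_of_powers n d r (\<lambda>x. \<Prod>j\<le>n. x j ^ \<alpha> j)"
proof -
  define ms where "ms = concat (map (\<lambda>j. replicate (\<alpha> j) (unit_vector j)) [0..<Suc n])"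
  have "length (concat (map (\<lambda>j. replicate (\<alpha> j) (unit_vector j)) [0..<k])) = (\<Sum>j<k. \<alpha> j)" for k
    by (induction k) auto
  then have "length ms = (\<Sum>j<Suc n. \<alpha> j)" unfolding ms_def .
  then have "length ms = d" using assms(2) by (simp only: lessThan_Suc_atMost)
  have "(\<Prod>m\<leftarrow>concat (map (\<lambda>j. replicate (\<alpha> j) (unit_vector j)) [0..<k]). f m)
      = (\<Prod>j<k. f (unit_vector j) ^ \<alpha> j)" for k and f :: "(nat \<Rightarrow> complex) \<Rightarrow> complex"
    by (induction k) (auto simp: map_concat)
  then have "(\<Prod>m\<leftarrow>ms. lin_form n m x) = (\<Prod>j<Suc n. lin_form n (unit_vector j) x ^ \<alpha> j)" for x
    unfolding ms_def .
  then have monomial_eq: "(\<lambda>x. lin_form n (\<lambda>j. 0) x ^ (d - length ms) * (\<Prod>m\<leftarrow>ms. lin_form n m x))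
      = (\<lambda>x. \<Prod>j\<le>n. x j ^ \<alpha> j)"
    using \<open>length ms = d\<close> by (simp add: lessThan_Suc_atMost lin_form_unit_vector)
  have "\<exists>r. sum_of_powers n d r
      (\<lambda>x. lin_form n (\<lambda>j. 0) x ^ (d - length ms) * (\<Prod>m\<leftarrow>ms. lin_form n m x))"
    using \<open>length ms = d\<close> by (intro power_mult_prod_list_sum_of_powers[OF assms(1)]) simp
  then show ?thesis by (simp only: monomial_eq)
qed

lemma form_sum_of_powers:
  assumes "0 < d" "is_form n d P"
  shows "\<exists>r. sum_of_powers n d r P"
proof -
  obtain c where P: "P = (\<lambda>x. \<Sum>\<alpha>\<in>exps n d. c \<alpha> * (\<Prod>j\<le>n. x j ^ \<alpha> j))"
    using assms(2) by (auto simp: is_form_def)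
  have "\<forall>\<alpha>\<in>exps n d. \<exists>r. sum_of_powers n d r (\<lambda>x. \<Prod>j\<le>n. x j ^ \<alpha> j)"
    using monomial_sum_of_powers[OF assms(1)] by (simp add: exps_def)
  then obtain r where "\<forall>\<alpha>\<in>exps n d. sum_of_powers n d (r \<alpha>) (\<lambda>x. \<Prod>j\<le>n. x j ^ \<alpha> j)"
    by metis
  then have "sum_of_powers n d (\<Sum>\<alpha>\<in>exps n d. r \<alpha>) P"
    unfolding P using assms(1) by (intro sum_of_powers_sum sum_of_powers_scale) auto
  then show ?thesis ..
qed

definition distinct_points :: "nat \<Rightarrow> nat \<Rightarrow> (nat \<Rightarrow> nat \<Rightarrow> complex) \<Rightarrow> bool" where
  "distinct_points n s A \<longleftrightarrow> (\<forall>i<s. \<exists>j\<le>n. A i j \<noteq> 0) \<and>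
     (\<forall>i<s. \<forall>i'<s. i \<noteq> i' \<longrightarrow> \<not> proportional n (A i) (A i'))"

lemma proportional_sym:
  assumes "proportional n a b" "\<exists>j\<le>n. b j \<noteq> 0"
  shows "proportional n b a"
proof -
  obtain \<kappa> where \<kappa>: "\<forall>j\<le>n. b j = \<kappa> * a j" using assms(1) by (auto simp: proportional_def)
  then have "\<kappa> \<noteq> 0" using assms(2) by auto
  then have "\<forall>j\<le>n. a j = inverse \<kappa> * b j" using \<kappa> by simp
  then show ?thesis unfolding proportional_def by blast
qed

lemma lin_form_proportional:
  "proportional n a b \<Longrightarrow> \<exists>\<kappa>. \<forall>x. lin_form n b x = \<kappa> * lin_form n a x"
  by (auto simp: proportional_def lin_form_def sum_distrib_left mult.assoc)

lemma distinct_points_add_power: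
  assumes "0 < d" "distinct_points n s A"
  shows "\<exists>s' A' c'. distinct_points n s' A' \<and>
    (\<lambda>x. (\<Sum>i<s. c i * lin_form n (A i) x ^ d) + lin_form n v x ^ d) =
    (\<lambda>x. \<Sum>i<s'. c' i * lin_form n (A' i) x ^ d)"
proof (cases "\<exists>i<s. proportional n (A i) v")
  case True
  then obtain i \<kappa> where "i < s" and \<kappa>: "\<And>x. lin_form n v x = \<kappa> * lin_form n (A i) x"
    using lin_form_proportional by blast
  have "(\<Sum>i'<s. c i' * lin_form n (A i') x ^ d) + lin_form n v x ^ d =
        (\<Sum>i'<s. (c(i := c i + \<kappa> ^ d)) i' * lin_form n (A i') x ^ d)" for x
    using \<open>i < s\<close> by (simp add: \<kappa> sum.remove[of _ i] algebra_simps)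
  then show ?thesis using assms(2) by blast
next
  case False
  show ?thesis
  proof (cases "\<exists>j\<le>n. v j \<noteq> 0")
    case True
    have "distinct_points n (Suc s) (A(s := v))"
      using assms(2) False True proportional_sym
      unfolding distinct_points_def by (auto simp: less_Suc_eq)
    moreover have "(\<lambda>x. (\<Sum>i<s. c i * lin_form n (A i) x ^ d) + lin_form n v x ^ d) =
        (\<lambda>x. \<Sum>i<Suc s. (c(s := 1)) i * lin_form n ((A(s := v)) i) x ^ d)"
      by simp
    ultimately show ?thesis by blast
  next
    case False
    then have "lin_form n v x = 0" for x by (simp add: lin_form_def)
    then show ?thesis
      using assms by (intro exI[of _ s] exI[of _ A] exI[of _ c]) (simp add: zero_power)
  qed
qed

lemma sum_of_powers_distinct_points:
  assumes "0 < d" "sum_of_powers n d r P"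
  shows "\<exists>s A c. distinct_points n s A \<and> P = (\<lambda>x. \<Sum>i<s. c i * lin_form n (A i) x ^ d)"
proof -
  obtain L where P: "P = (\<lambda>x. \<Sum>i<r. lin_form n (L i) x ^ d)"
    using assms(2) by (auto simp: sum_of_powers_def)
  have "\<exists>s A c. distinct_points n s A \<and>
      (\<lambda>x. \<Sum>i<k. lin_form n (L i) x ^ d) = (\<lambda>x. \<Sum>i<s. c i * lin_form n (A i) x ^ d)" for k
  proof (induction k)
    case 0
    show ?case by (intro exI[of _ 0]) (simp add: distinct_points_def)
  next
    case (Suc k)
    then obtain s A c where "distinct_points n s A"
      and IH: "(\<lambda>x. \<Sum>i<k. lin_form n (L i) x ^ d) = (\<lambda>x. \<Sum>i<s. c i * lin_form n (A i) x ^ d)"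
      by blast
    obtain s' A' c' where "distinct_points n s' A'"
      and add: "(\<lambda>x. (\<Sum>i<s. c i * lin_form n (A i) x ^ d) + lin_form n (L k) x ^ d)
              = (\<lambda>x. \<Sum>i<s'. c' i * lin_form n (A' i) x ^ d)"
      using distinct_points_add_power[OF assms(1) \<open>distinct_points n s A\<close>] by blast
    have "(\<lambda>x. \<Sum>i<Suc k. lin_form n (L i) x ^ d)
        = (\<lambda>x. (\<Sum>i<k. lin_form n (L i) x ^ d) + lin_form n (L k) x ^ d)"
      by simp
    also have "\<dots> = (\<lambda>x. (\<Sum>i<s. c i * lin_form n (A i) x ^ d) + lin_form n (L k) x ^ d)"
      by (simp only: IH[unfolded fun_eq_iff, rule_format])
    also note add
    finally show ?case using \<open>distinct_points n s' A'\<close> by blast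
  qed
  then show ?thesis unfolding P .
qed

lemma curvilinear_span_exists:
  assumes "0 < d" "is_form n d P"
  shows "\<exists>r s e A. curvilinear_data n s e A \<and> (\<Sum>i<s. e i) = r \<and> in_curvilinear_span n d s e A P"
proof -
  obtain r where "sum_of_powers n d r P" using form_sum_of_powers[OF assms] ..
  then obtain s A c where "distinct_points n s A"
    and P: "P = (\<lambda>x. \<Sum>i<s. c i * lin_form n (A i) x ^ d)"
    using sum_of_powers_distinct_points[OF assms(1)] by blast
  have "curvilinear_data n s (\<lambda>i. 1) (\<lambda>i m. A i)"
    using \<open>distinct_points n s A\<close> by (simp add: curvilinear_data_def distinct_points_def)
  moreover have "in_curvilinear_span n d s (\<lambda>i. 1) (\<lambda>i m. A i) P"
    unfolding in_curvilinear_span_def P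
    by (intro exI[of _ "\<lambda>i k. c i"]) (simp add: jet_power_coeff_def coeff_0_power)
  ultimately show ?thesis by blast
qed

lemma sum_affine_le:
  fixes x :: "nat \<Rightarrow> int"
  assumes "1 \<le> s" "1 \<le> k"
  shows "(\<Sum>i<s. (x i - 1) * k + 1) \<le> ((\<Sum>i<s. x i) - 1) * k + 1"
proof -
  have "(\<Sum>i<s. (x i - 1) * k + 1) = ((\<Sum>i<s. x i) - int s) * k + int s"
    by (simp add: sum.distrib sum_subtractf sum_distrib_right left_diff_distrib)
  moreover have "((\<Sum>i<s. x i) - 1) * k + 1 - (((\<Sum>i<s. x i) - int s) * k + int s)
      = (int s - 1) * (k - 1)"
    by (simp add: algebra_simps)
  moreover have "0 \<le> (int s - 1) * (k - 1)" using assms by simp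
  ultimately show ?thesis by linarith
qed

theorem theorem1:
  fixes n d :: nat and P :: "(nat \<Rightarrow> complex) \<Rightarrow> complex"
  assumes "1 \<le> n" and "2 \<le> d" and "is_form n d P" and "P \<noteq> (\<lambda>x. 0)"
  shows "int (waring_rank n d P) \<le>
           (int (curvilinear_rank n d P) - 1) * int d + 2 - int (curvilinear_rank n d P)"
proof -
  have "\<exists>s e A. curvilinear_data n s e A \<and> (\<Sum>i<s. e i) = curvilinear_rank n d P \<and>
      in_curvilinear_span n d s e A P"
    unfolding curvilinear_rank_def
    by (rule LeastI_ex) (use curvilinear_span_exists assms(2,3) in auto)
  then obtain s e A c where data: "curvilinear_data n s e A"
    and rank: "(\<Sum>i<s. e i) = curvilinear_rank n d P"
    and P: "P = (\<lambda>x. \<Sum>i<s. \<Sum>k<e i. c i k * jet_power_coeff n d (A i) (e i) k x)"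
    unfolding in_curvilinear_span_def by blast
  have "1 \<le> s" using P assms(4) by (cases s) auto
  have e: "1 \<le> e i" if "i < s" for i using data that by (simp add: curvilinear_data_def)
  have "sum_of_powers n d (\<Sum>i<s. (e i - 1) * (d - 1) + 1) P"
    unfolding P using assms(2) by (intro sum_of_powers_sum jet_combination_sum_of_powers)
  then have "int (waring_rank n d P) \<le> int (\<Sum>i<s. (e i - 1) * (d - 1) + 1)"
    by (rule waring_rank_le[THEN of_nat_mono])
  also have "\<dots> = (\<Sum>i<s. (int (e i) - 1) * (int d - 1) + 1)"
    unfolding of_nat_sum using e assms(2) by (intro sum.cong) simp_all
  also have "\<dots> \<le> ((\<Sum>i<s. int (e i)) - 1) * (int d - 1) + 1"
    using \<open>1 \<le> s\<close> assms(2) by (intro sum_affine_le) simp_all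
  also have "\<dots> = (int (curvilinear_rank n d P) - 1) * int d + 2 - int (curvilinear_rank n d P)"
    unfolding rank[symmetric] by (simp add: algebra_simps)
  finally show ?thesis .
qed

end
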